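(* Let $S$ be a species tree, $(T,\sigma)$ a gene tree, and $\mu:V(T)\to V(S)\cup E(S)$ a reconciliation map without horizontal gene transfer (satisfying (R0), (R1), (R2), (R3.i), (R3.ii)) that in addition satisfies axiom (R4). Let $A\subseteq L(T)$ with $|\sigma(A)|\geq 2$. If $\operatorname{lca}_S(\sigma(A))\prec_S\mu(\operatorname{lca}_T(A))$, then $\operatorname{lca}_T(A)$ is a duplication event, i.e., $\mu(\operatorname{lca}_T(A))\in E(S)$.
   Context: A planted phylogenetic tree $T$ has a distinguished leaf $0_T$ (the planted root) whose unique neighbour $\rho_T$ is the root; every other non-leaf vertex has at least two children. $L(T)$ denotes the leaves other than $0_T$. For vertices, $a\preceq_T b$ means $b$ lies on the path from $a$ to $0_T$; $\operatorname{lca}_T(A)$ is the $\preceq_T$-minimal vertex that is $\succeq_T$ every element of $A$. A species tree $S$ is a planted phylogenetic tree with planted root $0_S$, root $\rho_S$ and leaf set $\mathscr{S}$ (the species); $V^0(S)$ denotes the inner vertices of $S$ (neither leaves nor $0_S$). The order $\preceq_S$ is extended to $V(S)\cup E(S)$ by regarding each edge $e=pq$ ($q$ a child of $p$) as lying strictly between $q$ and $p$: $q\prec_S e\prec_S p$, a vertex $w$ satisfies $w\prec_S e$ iff $w\preceq_S q$ and $e\prec_S w$ iff $p\preceq_S w$, and for edges $e=pq,e'=p'q'$, $e\prec_S e'$ iff $p\preceq_S q'$; $\operatorname{lca}_S$ of elements of $V(S)\cup E(S)$ is the $\preceq_S$-minimal vertex above all of them. A gene tree $(T,\sigma)$ is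 a planted phylogenetic tree with $\sigma:L(T)\to\mathscr{S}$. A reconciliation map without horizontal gene transfer is $\mu:V(T)\to V(S)\cup E(S)$ with: (R0) $\mu(v)=0_S$ iff $v=0_T$; (R1) $\mu(v)=\sigma(v)$ for $v\in L(T)$; (R2) $v\prec_T w\Rightarrow\mu(v)\preceq_S\mu(w)$; and for each $v$ with $\mu(v)\in V^0(S)$: (R3.i) $\mu(v)=\operatorname{lca}_S(\mu(v'),\mu(v''))$ for at least two distinct children $v',v''$ of $v$; (R3.ii) $\mu(v'),\mu(v'')$ are $\preceq_S$-incomparable for any two distinct children $v',v''$ of $v$. Axiom (R4): for leaves $x,y,z$ of $T$, if $\mu(\operatorname{lca}_T(x,y))=\mu(\operatorname{lca}_T(x,z))\in V^0(S)$ then $\operatorname{lca}_S(\sigma(x),\sigma(y))=\operatorname{lca}_S(\sigma(x),\sigma(z))$. A vertex $v$ of $T$ is a duplication if $\mu(v)\in E(S)$. *)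

theory Defs
  imports Main
begin

text \<open>Rooted trees are given by a finite vertex set V, a set E of directed
edges (parent, child) and a distinguished vertex r0 (the planted root 0_T).\<close>

definition children :: "('v \<times> 'v) set \<Rightarrow> 'v \<Rightarrow> 'v set" where
  "children E v = {c. (v, c) \<in> E}"

text \<open>Leaves other than the planted root: vertices without children
(the planted root has exactly one child, so it is excluded).\<close>
definition leaves :: "'v set \<Rightarrow> ('v \<times> 'v) set \<Rightarrow> 'v set" where
  "leaves V E = {v \<in> V. children E v = {}}"

definition planted_phylo :: "'v set \<Rightarrow> ('v \<times> 'v) set \<Rightarrow> 'v \<Rightarrow> bool" where
  "planted_phylo V E r0 \<longleftrightarrow>
     finite V \<and> E \<subseteq> V \<times> V \<and> r0 \<in> V \<and>
     (\<forall>v\<in>V. (r0, v) \<in> E\<^sup>*) \<and>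
     (\<forall>p. (p, r0) \<notin> E) \<and>
     (\<forall>v\<in>V - {r0}. \<exists>!p. (p, v) \<in> E) \<and>
     card (children E r0) = 1 \<and>
     (\<forall>v\<in>V - {r0}. children E v \<noteq> {} \<longrightarrow> card (children E v) \<ge> 2)"

definition tree_le :: "('v \<times> 'v) set \<Rightarrow> 'v \<Rightarrow> 'v \<Rightarrow> bool" where
  "tree_le E a b \<longleftrightarrow> (b, a) \<in> E\<^sup>*"

definition tree_less :: "('v \<times> 'v) set \<Rightarrow> 'v \<Rightarrow> 'v \<Rightarrow> bool" where
  "tree_less E a b \<longleftrightarrow> tree_le E a b \<and> a \<noteq> b"

definition lca :: "'v set \<Rightarrow> ('x \<Rightarrow> 'v \<Rightarrow> bool) \<Rightarrow> ('v \<Rightarrow> 'v \<Rightarrow> bool) \<Rightarrow> 'x set \<Rightarrow> 'v" where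
  "lca V le levv X = (THE w. w \<in> V \<and> (\<forall>x\<in>X. le x w) \<and>
       (\<forall>w'\<in>V. (\<forall>x\<in>X. le x w') \<longrightarrow> levv w w'))"

definition lcaT :: "'v set \<Rightarrow> ('v \<times> 'v) set \<Rightarrow> 'v set \<Rightarrow> 'v" where
  "lcaT V E X = lca V (tree_le E) (tree_le E) X"

text \<open>Elements of V(S) \<union> E(S): vertices and edges (Ed p q with q a child of p).\<close>
datatype 's elem = Vx 's | Ed 's 's

fun elem_le :: "('s \<times> 's) set \<Rightarrow> 's elem \<Rightarrow> 's elem \<Rightarrow> bool" where
  "elem_le E (Vx a) (Vx b) = tree_le E a b"
| "elem_le E (Vx w) (Ed p q) = tree_le E w q"
| "elem_le E (Ed p q) (Vx w) = tree_le E p w"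
| "elem_le E (Ed p q) (Ed p' q') = ((p = p' \<and> q = q') \<or> tree_le E p q')"

definition elem_less :: "('s \<times> 's) set \<Rightarrow> 's elem \<Rightarrow> 's elem \<Rightarrow> bool" where
  "elem_less E x y \<longleftrightarrow> elem_le E x y \<and> x \<noteq> y"

definition incomparable :: "('s \<times> 's) set \<Rightarrow> 's elem \<Rightarrow> 's elem \<Rightarrow> bool" where
  "incomparable E x y \<longleftrightarrow> \<not> elem_le E x y \<and> \<not> elem_le E y x"

definition lcaS :: "'s set \<Rightarrow> ('s \<times> 's) set \<Rightarrow> 's elem set \<Rightarrow> 's" where
  "lcaS V E X = lca V (\<lambda>x w. elem_le E x (Vx w)) (tree_le E) X"

definition vertex_elems :: "'s set \<Rightarrow> 's elem set" where
  "vertex_elems V = Vx ` V"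

definition edge_elems :: "('s \<times> 's) set \<Rightarrow> 's elem set" where
  "edge_elems E = {Ed p q | p q. (p, q) \<in> E}"

definition inner :: "'s set \<Rightarrow> ('s \<times> 's) set \<Rightarrow> 's \<Rightarrow> 's set" where
  "inner V E r0 = V - leaves V E - {r0}"

definition gene_tree :: "'g set \<Rightarrow> ('g \<times> 'g) set \<Rightarrow> 'g \<Rightarrow> ('g \<Rightarrow> 's) \<Rightarrow> 's set \<Rightarrow> bool" where
  "gene_tree VT ET r0T \<sigma> Spec \<longleftrightarrow> planted_phylo VT ET r0T \<and> (\<forall>v\<in>leaves VT ET. \<sigma> v \<in> Spec)"

definition reconc_map ::
  "'g set \<Rightarrow> ('g \<times> 'g) set \<Rightarrow> 'g \<Rightarrow> ('g \<Rightarrow> 's) \<Rightarrow>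
   's set \<Rightarrow> ('s \<times> 's) set \<Rightarrow> 's \<Rightarrow> ('g \<Rightarrow> 's elem) \<Rightarrow> bool" where
  "reconc_map VT ET r0T \<sigma> VS ES r0S \<mu> \<longleftrightarrow>
     (\<forall>v\<in>VT. \<mu> v \<in> vertex_elems VS \<union> edge_elems ES) \<and>
     (\<forall>v\<in>VT. \<mu> v = Vx r0S \<longleftrightarrow> v = r0T) \<and>
     (\<forall>v\<in>leaves VT ET. \<mu> v = Vx (\<sigma> v)) \<and>
     (\<forall>v\<in>VT. \<forall>w\<in>VT. tree_less ET v w \<longrightarrow> elem_le ES (\<mu> v) (\<mu> w)) \<and>
     (\<forall>v\<in>VT. (\<exists>x\<in>inner VS ES r0S. \<mu> v = Vx x) \<longrightarrow>
        (\<exists>v' v''. v' \<in> children ET v \<and> v'' \<in> children ET v \<and> v' \<noteq> v'' \<and>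
            \<mu> v = Vx (lcaS VS ES {\<mu> v', \<mu> v''})) \<and>
        (\<forall>v'\<in>children ET v. \<forall>v''\<in>children ET v. v' \<noteq> v'' \<longrightarrow>
            incomparable ES (\<mu> v') (\<mu> v'')))"

definition axiom_R4 ::
  "'g set \<Rightarrow> ('g \<times> 'g) set \<Rightarrow> 'g \<Rightarrow> ('g \<Rightarrow> 's) \<Rightarrow>
   's set \<Rightarrow> ('s \<times> 's) set \<Rightarrow> 's \<Rightarrow> ('g \<Rightarrow> 's elem) \<Rightarrow> bool" where
  "axiom_R4 VT ET r0T \<sigma> VS ES r0S \<mu> \<longleftrightarrow>
     (\<forall>x\<in>leaves VT ET. \<forall>y\<in>leaves VT ET. \<forall>z\<in>leaves VT ET.
        (\<mu> (lcaT VT ET {x, y}) = \<mu> (lcaT VT ET {x, z}) \<and>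
         \<mu> (lcaT VT ET {x, y}) \<in> Vx ` inner VS ES r0S) \<longrightarrow>
        lcaS VS ES {Vx (\<sigma> x), Vx (\<sigma> y)} = lcaS VS ES {Vx (\<sigma> x), Vx (\<sigma> z)})"

end

theory Submission
  imports Defs
begin

text \<open>Let \<open>v = lca\<^sub>T(A)\<close> and suppose \<open>\<mu>(v)\<close> is a vertex \<open>s\<close> of \<open>S\<close>. Then \<open>s\<close> is an inner
  vertex, because it lies strictly above \<open>lca\<^sub>S(\<sigma>(A))\<close> and \<open>v\<close> is not the planted root.
  Choose \<open>x, y \<in> A\<close> below distinct children of \<open>v\<close>. Axiom (R4) forces
  \<open>s = lca\<^sub>S(\<sigma>(x), \<sigma>(y))\<close>: otherwise let \<open>c\<close> be the child of \<open>s\<close> above that lca. The child of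
  \<open>v\<close> above \<open>x\<close> is mapped below the edge \<open>sc\<close>, so by (R3.i) some other child of \<open>v\<close> is not;
  for a leaf \<open>z\<close> below it (R4) gives \<open>lca\<^sub>S(\<sigma>(x), \<sigma>(z)) = lca\<^sub>S(\<sigma>(x), \<sigma>(y))\<close>, which puts \<open>\<sigma>(z)\<close>
  below \<open>c\<close> and hence that child below \<open>sc\<close> after all. But
  \<open>lca\<^sub>S(\<sigma>(x), \<sigma>(y)) \<preceq> lca\<^sub>S(\<sigma>(A)) \<prec> s\<close>.\<close>

lemma elem_le_refl [simp]: "elem_le E e e"
  by (cases e) (auto simp: tree_le_def)

lemma elem_le_Ed_imp_le_child:
  "elem_le E e (Ed s c) \<Longrightarrow> e \<noteq> Ed s c \<Longrightarrow> elem_le E e (Vx c)"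
  by (cases e) (auto simp: tree_le_def)

locale planted_tree =
  fixes V :: "'v set" and E :: "('v \<times> 'v) set" and r0 :: 'v
  assumes planted_phylo: "planted_phylo V E r0"
begin

lemma finite_vertices: "finite V"
  and edges_subset: "E \<subseteq> V \<times> V"
  and root_in_vertices: "r0 \<in> V"
  and root_reaches: "v \<in> V \<Longrightarrow> (r0, v) \<in> E\<^sup>*"
  and no_edge_into_root: "(p, r0) \<notin> E"
  using planted_phylo by (simp_all add: planted_phylo_def)

lemma parent_unique:
  assumes "(p, a) \<in> E" "(p', a) \<in> E"
  shows "p = p'"
proof -
  have "a \<in> V - {r0}" using assms edges_subset no_edge_into_root by auto
  then have "\<exists>!p. (p, a) \<in> E" using planted_phylo by (simp add: planted_phylo_def)
  then show ?thesis using assms by auto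
qed

lemma root_child_unique:
  assumes "(r0, c) \<in> E" "(r0, c') \<in> E"
  shows "c = c'"
proof -
  have "card (children E r0) = 1" using planted_phylo by (simp add: planted_phylo_def)
  then obtain d where "children E r0 = {d}" by (rule card_1_singletonE)
  then show ?thesis by (metis assms children_def mem_Collect_eq singletonD)
qed

lemma no_cycle: "(a, a) \<notin> E\<^sup>+"
proof
  assume cycle: "(a, a) \<in> E\<^sup>+"
  then have "a \<in> V" using trancl_subset_Sigma[OF edges_subset] by auto
  then have "(r0, a) \<in> E\<^sup>*" by (rule root_reaches)
  then show False using cycle
  proof (induction rule: rtrancl_induct)
    case base
    then show ?case using no_edge_into_root by (auto dest: tranclD2)
  next
    case (step y z)
    then obtain p where "(z, p) \<in> E\<^sup>*" "(p, z) \<in> E" by (auto dest: tranclD2)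
    moreover have "p = y" using parent_unique \<open>(p, z) \<in> E\<close> step.hyps(2) by auto
    ultimately have "(y, y) \<in> E\<^sup>+" using step.hyps(2) by (auto intro: rtrancl_into_trancl2)
    then show ?case by (rule step.IH)
  qed
qed

lemma rtrancl_antisym: "(a, b) \<in> E\<^sup>* \<Longrightarrow> (b, a) \<in> E\<^sup>* \<Longrightarrow> a = b"
  using no_cycle by (metis rtranclD trancl_rtrancl_trancl)

lemma ancestors_comparable:
  "(b, a) \<in> E\<^sup>* \<Longrightarrow> (c, a) \<in> E\<^sup>* \<Longrightarrow> (b, c) \<in> E\<^sup>* \<or> (c, b) \<in> E\<^sup>*"
proof (induction arbitrary: c rule: rtrancl_induct)
  case (step y z)
  show ?case
  proof (cases "c = z")
    case False
    then obtain p where "(c, p) \<in> E\<^sup>*" "(p, z) \<in> E"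
      using step.prems by (auto dest: rtranclD tranclD2)
    moreover have "p = y" using parent_unique \<open>(p, z) \<in> E\<close> step.hyps(2) .
    ultimately show ?thesis using step.IH by auto
  qed (use step.hyps in auto)
qed simp

lemma ancestor_of_child: "(v, c) \<in> E \<Longrightarrow> (b, c) \<in> E\<^sup>+ \<Longrightarrow> (b, v) \<in> E\<^sup>*"
  using parent_unique by (blast dest: tranclD2)

lemma child_towards_unique:
  assumes "(v, c) \<in> E" "(v, c') \<in> E" "(c, x) \<in> E\<^sup>*" "(c', x) \<in> E\<^sup>*"
  shows "c = c'"
proof (rule ccontr)
  assume "c \<noteq> c'"
  have "(v, v) \<in> E\<^sup>+" if "(d, d') \<in> E\<^sup>*" "d \<noteq> d'" "(v, d) \<in> E" "(v, d') \<in> E" for d d'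
    using that ancestor_of_child[of v d' d] by (auto dest: rtranclD intro: rtrancl_into_trancl2)
  then show False
    using ancestors_comparable[OF assms(3,4)] \<open>c \<noteq> c'\<close> assms(1,2) no_cycle by metis
qed

lemma wf_converse_edges: "wf (E\<inverse>)"
proof (rule finite_acyclic_wf_converse)
  show "finite E" using finite_subset[OF edges_subset] finite_vertices by blast
  show "acyclic E" unfolding acyclic_def using no_cycle by blast
qed

lemma reachable_in_vertices: "(a, z) \<in> E\<^sup>* \<Longrightarrow> a \<in> V \<Longrightarrow> z \<in> V"
  by (induction rule: rtrancl_induct) (use edges_subset in auto)

lemma exists_leaf_below:
  assumes "a \<in> V"
  obtains z where "z \<in> leaves V E" "(a, z) \<in> E\<^sup>*"
proof -
  obtain z where z: "(a, z) \<in> E\<^sup>*" and lowest: "\<And>y. (z, y) \<in> E \<Longrightarrow> (a, y) \<notin> E\<^sup>*"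
    using wf_converse_edges[unfolded wf_eq_minimal, rule_format, of "a" "{z. (a, z) \<in> E\<^sup>*}"]
    by auto
  have "(z, y) \<notin> E" for y using lowest[of y] z by (meson rtrancl.rtrancl_into_rtrancl)
  then have "children E z = {}" by (simp add: children_def)
  then have "z \<in> leaves V E" using reachable_in_vertices[OF z assms] by (simp add: leaves_def)
  then show ?thesis using that z by blast
qed

lemma leaf_descendant_eq: "x \<in> leaves V E \<Longrightarrow> (x, a) \<in> E\<^sup>* \<Longrightarrow> a = x"
  by (auto simp: leaves_def children_def elim: converse_rtranclE)

lemma ancestors_have_lowest:
  assumes "u \<in> U" "\<forall>w\<in>U. (w, a) \<in> E\<^sup>*"
  obtains w where "w \<in> U" "\<forall>w'\<in>U. (w', w) \<in> E\<^sup>*"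
proof -
  obtain w where "w \<in> U" and lowest: "\<And>y. (w, y) \<in> E\<^sup>+ \<Longrightarrow> y \<notin> U"
    using wf_trancl[OF wf_converse_edges, unfolded wf_eq_minimal, rule_format, OF assms(1)]
    by (auto simp: trancl_converse)
  have "(w', w) \<in> E\<^sup>*" if "w' \<in> U" for w'
    using ancestors_comparable[of w a w'] assms(2) \<open>w \<in> U\<close> that lowest
    by (metis rtranclD)
  then show ?thesis using that \<open>w \<in> U\<close> by blast
qed

text \<open>The hypothesis holds for \<^const>\<open>lcaT\<close>, and for \<^const>\<open>lcaS\<close> because an edge \<open>pq\<close>
  has the same upper bounds as \<open>p\<close>.\<close>

lemma lca_least_upper_bound:
  assumes "X \<noteq> {}" and principal: "\<forall>x\<in>X. \<exists>a\<in>V. \<forall>w. le x w \<longleftrightarrow> (w, a) \<in> E\<^sup>*"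
  defines "u \<equiv> lca V le (tree_le E) X"
  shows "u \<in> V \<and> (\<forall>x\<in>X. le x u) \<and> (\<forall>w\<in>V. (\<forall>x\<in>X. le x w) \<longrightarrow> tree_le E u w)"
proof -
  obtain x0 a0 where "x0 \<in> X" and a0: "\<And>w. le x0 w \<longleftrightarrow> (w, a0) \<in> E\<^sup>*"
    using assms(1) principal by blast
  define U where "U = {w \<in> V. \<forall>x\<in>X. le x w}"
  have "r0 \<in> U" using principal root_in_vertices root_reaches by (auto simp: U_def)
  moreover have "\<forall>w\<in>U. (w, a0) \<in> E\<^sup>*" using a0 \<open>x0 \<in> X\<close> by (auto simp: U_def)
  ultimately obtain w where "w \<in> U" and lowest: "\<forall>w'\<in>U. (w', w) \<in> E\<^sup>*"
    by (rule ancestors_have_lowest)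
  then have lub: "w \<in> V \<and> (\<forall>x\<in>X. le x w) \<and> (\<forall>w'\<in>V. (\<forall>x\<in>X. le x w') \<longrightarrow> tree_le E w w')"
    by (auto simp: U_def tree_le_def)
  have "u = w"
    unfolding u_def lca_def
  proof (rule the_equality)
    fix y assume "y \<in> V \<and> (\<forall>x\<in>X. le x y) \<and> (\<forall>w'\<in>V. (\<forall>x\<in>X. le x w') \<longrightarrow> tree_le E y w')"
    then show "y = w" using lub rtrancl_antisym by (auto simp: tree_le_def)
  qed (rule lub)
  then show ?thesis using lub by simp
qed

lemma lcaT_least_upper_bound:
  assumes "X \<noteq> {}" "X \<subseteq> V"
  shows "x \<in> X \<Longrightarrow> (lcaT V E X, x) \<in> E\<^sup>*"
    and "w \<in> V \<Longrightarrow> \<forall>x\<in>X. (w, x) \<in> E\<^sup>* \<Longrightarrow> (w, lcaT V E X) \<in> E\<^sup>*"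
  using lca_least_upper_bound[of X "tree_le E"] assms
  by (auto simp: lcaT_def tree_le_def)

lemma lcaS_least_upper_bound:
  assumes "X \<noteq> {}" "X \<subseteq> vertex_elems V \<union> edge_elems E"
  shows "lcaS V E X \<in> V"
    and "e \<in> X \<Longrightarrow> elem_le E e (Vx (lcaS V E X))"
    and "w \<in> V \<Longrightarrow> \<forall>e\<in>X. elem_le E e (Vx w) \<Longrightarrow> (w, lcaS V E X) \<in> E\<^sup>*"
proof -
  have "\<exists>a\<in>V. \<forall>w. elem_le E e (Vx w) \<longleftrightarrow> (w, a) \<in> E\<^sup>*" if e: "e \<in> X" for e
  proof -
    consider a where "e = Vx a" "a \<in> V" | p q where "e = Ed p q" "p \<in> V"
      using e assms(2) edges_subset unfolding vertex_elems_def edge_elems_def by blast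
    then show ?thesis by cases (auto simp: tree_le_def)
  qed
  then have "lcaS V E X \<in> V \<and> (\<forall>e\<in>X. elem_le E e (Vx (lcaS V E X))) \<and>
      (\<forall>w\<in>V. (\<forall>e\<in>X. elem_le E e (Vx w)) \<longrightarrow> tree_le E (lcaS V E X) w)"
    unfolding lcaS_def by (intro lca_least_upper_bound assms(1) ballI)
  then show "lcaS V E X \<in> V" "e \<in> X \<Longrightarrow> elem_le E e (Vx (lcaS V E X))"
    "w \<in> V \<Longrightarrow> \<forall>e\<in>X. elem_le E e (Vx w) \<Longrightarrow> (w, lcaS V E X) \<in> E\<^sup>*"
    by (auto simp: tree_le_def)
qed

lemma lcaS_mono:
  assumes "X \<noteq> {}" "X \<subseteq> Y" "Y \<subseteq> vertex_elems V \<union> edge_elems E"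
  shows "(lcaS V E Y, lcaS V E X) \<in> E\<^sup>*"
proof -
  have "Y \<noteq> {}" "X \<subseteq> vertex_elems V \<union> edge_elems E" using assms by auto
  then show ?thesis
    using lcaS_least_upper_bound(1,2)[OF _ assms(3)] lcaS_least_upper_bound(3)[OF assms(1)]
      assms(2) by blast
qed

lemma inner_if_proper_ancestor:
  "s \<in> V \<Longrightarrow> s \<noteq> r0 \<Longrightarrow> (s, t) \<in> E\<^sup>+ \<Longrightarrow> s \<in> inner V E r0"
  by (auto simp: inner_def leaves_def children_def dest: tranclD)

lemma lcaT_pair_eq:
  assumes "x \<in> V" "y \<in> V" "(v, cx) \<in> E" "(v, cy) \<in> E" "cx \<noteq> cy"
    "(cx, x) \<in> E\<^sup>*" "(cy, y) \<in> E\<^sup>*"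
  shows "lcaT V E {x, y} = v"
proof (rule ccontr)
  let ?u = "lcaT V E {x, y}"
  have "v \<in> V" using assms(3) edges_subset by blast
  moreover have "(v, x) \<in> E\<^sup>*" "(v, y) \<in> E\<^sup>*"
    using assms(3-7) by (auto intro: converse_rtrancl_into_rtrancl)
  ultimately have "(v, ?u) \<in> E\<^sup>*" using lcaT_least_upper_bound(2)[of "{x, y}" v] assms(1,2)
    by auto
  moreover assume "?u \<noteq> v"
  ultimately obtain c where c: "(v, c) \<in> E" "(c, ?u) \<in> E\<^sup>*" by (auto dest: rtranclD tranclD)
  have "(?u, x) \<in> E\<^sup>*" "(?u, y) \<in> E\<^sup>*" using lcaT_least_upper_bound(1)[of "{x, y}"] assms(1,2)
    by auto
  then have "c = cx" "c = cy"
    using child_towards_unique c assms(3,4,6,7) by (meson rtrancl_trans)+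
  then show False using assms(5) by simp
qed

lemma lcaT_splits:
  assumes "A \<noteq> {}" "A \<subseteq> V" "lcaT V E A \<notin> A"
  obtains x y cx cy where "x \<in> A" "y \<in> A" "(lcaT V E A, cx) \<in> E" "(lcaT V E A, cy) \<in> E"
    "cx \<noteq> cy" "(cx, x) \<in> E\<^sup>*" "(cy, y) \<in> E\<^sup>*"
proof -
  let ?v = "lcaT V E A"
  have child: "\<exists>c. (?v, c) \<in> E \<and> (c, a) \<in> E\<^sup>*" if "a \<in> A" for a
    using lcaT_least_upper_bound(1)[OF assms(1,2) that] assms(3) that
    by (metis converse_rtranclE)
  obtain x c0 where x: "x \<in> A" "(?v, c0) \<in> E" "(c0, x) \<in> E\<^sup>*"
    using assms(1) child by blast
  have "\<not> (\<forall>a\<in>A. (c0, a) \<in> E\<^sup>*)"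
  proof
    assume "\<forall>a\<in>A. (c0, a) \<in> E\<^sup>*"
    moreover have "c0 \<in> V" using x(2) edges_subset by blast
    ultimately have "(c0, ?v) \<in> E\<^sup>*" using lcaT_least_upper_bound(2)[OF assms(1,2)] by blast
    then show False using x(2) no_cycle by (auto intro: rtrancl_into_trancl2)
  qed
  then obtain y cy where "y \<in> A" "(?v, cy) \<in> E" "(cy, y) \<in> E\<^sup>*" "(c0, y) \<notin> E\<^sup>*"
    using child by blast
  then show ?thesis using that[OF x(1) _ x(2)] x(3) by blast
qed

lemma lcaT_leaves_not_mem:
  assumes "A \<subseteq> leaves V E" "card A \<ge> 2"
  shows "lcaT V E A \<notin> A"
proof
  assume v: "lcaT V E A \<in> A"
  have "A \<noteq> {}" "A \<subseteq> V" using assms by (auto simp: leaves_def)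
  then have "A \<subseteq> {lcaT V E A}"
    using leaf_descendant_eq v assms(1) lcaT_least_upper_bound(1) by blast
  then have "card A \<le> 1" by (simp add: card_mono[of "{_}", simplified])
  then show False using assms(2) by simp
qed

lemma elem_le_edge_if_above_descendant:
  assumes sc: "(s, c) \<in> E" and e: "e \<in> vertex_elems V \<union> edge_elems E"
    and below_s: "elem_le E e (Vx s)" "e \<noteq> Vx s"
    and \<alpha>: "(c, \<alpha>) \<in> E\<^sup>*" "elem_le E (Vx \<alpha>) e"
  shows "elem_le E e (Ed s c)"
proof (cases e)
  case (Vx w)
  then have "(s, w) \<in> E\<^sup>*" "w \<noteq> s" "(w, \<alpha>) \<in> E\<^sup>*" using below_s \<alpha> by (auto simp: tree_le_def)
  then show ?thesis
    using Vx ancestors_comparable[of w \<alpha> c] \<alpha>(1) ancestor_of_child[OF sc, of w] rtrancl_antisym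
    by (auto simp: tree_le_def dest: rtranclD)
next
  case (Ed p q)
  then have pq: "(p, q) \<in> E" using e by (auto simp: vertex_elems_def edge_elems_def)
  have "(s, p) \<in> E\<^sup>*" "(q, \<alpha>) \<in> E\<^sup>*" using below_s(1) \<alpha>(2) Ed by (auto simp: tree_le_def)
  show ?thesis
  proof (cases "q = c")
    case True
    then show ?thesis using Ed parent_unique[OF pq] sc by simp
  next
    case False
    have "(q, c) \<notin> E\<^sup>+"
    proof
      assume "(q, c) \<in> E\<^sup>+"
      then have "(q, s) \<in> E\<^sup>*" using ancestor_of_child sc by blast
      then show False using \<open>(s, p) \<in> E\<^sup>*\<close> pq no_cycle by (meson rtrancl_into_trancl1 rtrancl_trans)
    qed
    then have "(c, q) \<in> E\<^sup>+"
      using ancestors_comparable[OF \<open>(q, \<alpha>) \<in> E\<^sup>*\<close> \<alpha>(1)] False by (auto dest: rtranclD)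
    then show ?thesis using Ed ancestor_of_child[OF pq] by (simp add: tree_le_def)
  qed
qed

lemma lcaS_pair_neq_if_below_edge:
  assumes "(s, c) \<in> E" and "e1 \<in> vertex_elems V \<union> edge_elems E" "e2 \<in> vertex_elems V \<union> edge_elems E"
    and "incomparable E e1 e2" and "elem_le E e1 (Ed s c)" "elem_le E e2 (Ed s c)"
  shows "lcaS V E {e1, e2} \<noteq> s"
proof
  assume lca: "lcaS V E {e1, e2} = s"
  have "e1 \<noteq> Ed s c" "e2 \<noteq> Ed s c" using assms(4-6) by (auto simp: incomparable_def)
  then have "elem_le E e1 (Vx c)" "elem_le E e2 (Vx c)"
    using elem_le_Ed_imp_le_child[OF assms(5)] elem_le_Ed_imp_le_child[OF assms(6)] by auto
  moreover have "c \<in> V" using assms(1) edges_subset by auto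
  ultimately have "(c, s) \<in> E\<^sup>*"
    using lcaS_least_upper_bound(3)[of "{e1, e2}" c] assms(2,3) lca by auto
  then show False using assms(1) no_cycle by (auto intro: rtrancl_into_trancl2)
qed

end

locale reconciliation =
  S: planted_tree VS ES r0S + T: planted_tree VT ET r0T
  for VS :: "'s set" and ES and r0S and VT :: "'g set" and ET and r0T +
  fixes \<sigma> :: "'g \<Rightarrow> 's" and \<mu> :: "'g \<Rightarrow> 's elem"
  assumes species_leaves: "\<forall>v\<in>leaves VT ET. \<sigma> v \<in> leaves VS ES"
    and reconc_map: "reconc_map VT ET r0T \<sigma> VS ES r0S \<mu>"
begin

lemma mu_in_elems: "v \<in> VT \<Longrightarrow> \<mu> v \<in> vertex_elems VS \<union> edge_elems ES"
  and mu_eq_root_iff: "v \<in> VT \<Longrightarrow> \<mu> v = Vx r0S \<longleftrightarrow> v = r0T"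
  and mu_leaf: "v \<in> leaves VT ET \<Longrightarrow> \<mu> v = Vx (\<sigma> v)"
  using reconc_map by (simp_all add: reconc_map_def)

lemma species_in_elems: "x \<in> leaves VT ET \<Longrightarrow> Vx (\<sigma> x) \<in> vertex_elems VS \<union> edge_elems ES"
  using species_leaves by (auto simp: vertex_elems_def leaves_def)

lemma mu_mono:
  assumes "a \<in> VT" "b \<in> VT" "(b, a) \<in> ET\<^sup>*"
  shows "elem_le ES (\<mu> a) (\<mu> b)"
proof (cases "a = b")
  case False
  then have "tree_less ET a b" using assms(3) by (simp add: tree_less_def tree_le_def)
  then show ?thesis using reconc_map assms(1,2) unfolding reconc_map_def by blast
qed simp

lemma species_le_mu:
  assumes "a \<in> leaves VT ET" "(k, a) \<in> ET\<^sup>*" "k \<in> VT"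
  shows "elem_le ES (Vx (\<sigma> a)) (\<mu> k)"
  using mu_mono[of a k] mu_leaf assms by (auto simp: leaves_def)

lemma mu_inner_lca_children:
  assumes "v \<in> VT" "\<mu> v = Vx s" "s \<in> inner VS ES r0S"
  obtains v1 v2 where "(v, v1) \<in> ET" "(v, v2) \<in> ET" "v1 \<noteq> v2" "s = lcaS VS ES {\<mu> v1, \<mu> v2}"
proof -
  have "\<exists>v1 v2. v1 \<in> children ET v \<and> v2 \<in> children ET v \<and> v1 \<noteq> v2 \<and>
      \<mu> v = Vx (lcaS VS ES {\<mu> v1, \<mu> v2})"
    using reconc_map assms unfolding reconc_map_def by blast
  then show ?thesis using that assms(2) by (auto simp: children_def)
qed

lemma mu_inner_children_incomparable:
  assumes "v \<in> VT" "\<mu> v = Vx s" "s \<in> inner VS ES r0S"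
    and "(v, v1) \<in> ET" "(v, v2) \<in> ET" "v1 \<noteq> v2"
  shows "incomparable ES (\<mu> v1) (\<mu> v2)"
proof -
  have "\<forall>v1\<in>children ET v. \<forall>v2\<in>children ET v. v1 \<noteq> v2 \<longrightarrow> incomparable ES (\<mu> v1) (\<mu> v2)"
    using reconc_map assms(1-3) unfolding reconc_map_def by blast
  then show ?thesis using assms(4-6) by (simp add: children_def)
qed

lemma mu_child_neq_inner:
  assumes "\<mu> v = Vx s" "s \<in> inner VS ES r0S" "(v, k) \<in> ET"
  shows "\<mu> k \<noteq> Vx s"
proof -
  have VT: "v \<in> VT" "\<And>k. (v, k) \<in> ET \<Longrightarrow> k \<in> VT" using assms(3) T.edges_subset by auto
  obtain v1 v2 where "(v, v1) \<in> ET" "(v, v2) \<in> ET" "v1 \<noteq> v2"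
    using mu_inner_lca_children[OF VT(1) assms(1,2)] by blast
  then obtain w where w: "(v, w) \<in> ET" "w \<noteq> k" by blast
  then have "elem_le ES (\<mu> w) (Vx s)" using mu_mono[of w v] VT assms(1) by auto
  moreover have "incomparable ES (\<mu> k) (\<mu> w)"
    using mu_inner_children_incomparable[OF VT(1) assms] w by auto
  ultimately show ?thesis by (auto simp: incomparable_def)
qed

lemma mu_child_le_edge:
  assumes "\<mu> v = Vx s" "s \<in> inner VS ES r0S" "(s, c) \<in> ES" "(v, k) \<in> ET"
    and "a \<in> leaves VT ET" "(k, a) \<in> ET\<^sup>*" "(c, \<sigma> a) \<in> ES\<^sup>*"
  shows "elem_le ES (\<mu> k) (Ed s c)"
proof (rule S.elem_le_edge_if_above_descendant)
  have "v \<in> VT" "k \<in> VT" using assms(4) T.edges_subset by auto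
  then show "\<mu> k \<in> vertex_elems VS \<union> edge_elems ES" "elem_le ES (\<mu> k) (Vx s)"
    "elem_le ES (Vx (\<sigma> a)) (\<mu> k)"
    using mu_in_elems mu_mono[of k v] species_le_mu assms by auto
qed (use assms mu_child_neq_inner in auto)

lemma children_not_all_below_edge:
  assumes "v \<in> VT" "\<mu> v = Vx s" "s \<in> inner VS ES r0S" "(s, c) \<in> ES"
  obtains k where "(v, k) \<in> ET" "\<not> elem_le ES (\<mu> k) (Ed s c)"
proof -
  obtain v1 v2 where v12: "(v, v1) \<in> ET" "(v, v2) \<in> ET" "v1 \<noteq> v2"
    and s: "s = lcaS VS ES {\<mu> v1, \<mu> v2}"
    using mu_inner_lca_children[OF assms(1-3)] by metis
  have "\<mu> v1 \<in> vertex_elems VS \<union> edge_elems ES" "\<mu> v2 \<in> vertex_elems VS \<union> edge_elems ES"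
    using v12 T.edges_subset mu_in_elems by auto
  then have "\<not> (elem_le ES (\<mu> v1) (Ed s c) \<and> elem_le ES (\<mu> v2) (Ed s c))"
    using S.lcaS_pair_neq_if_below_edge[OF assms(4)] s
      mu_inner_children_incomparable[OF assms(1-3) v12] by metis
  then show ?thesis using that v12 by blast
qed

lemma axiom_R4_leaf_below_lcaS_pair:
  assumes R4: "axiom_R4 VT ET r0T \<sigma> VS ES r0S \<mu>"
    and s: "\<mu> v = Vx s" "s \<in> inner VS ES r0S"
    and children: "(v, cx) \<in> ET" "(v, cy) \<in> ET" "(v, cz) \<in> ET" "cx \<noteq> cy" "cx \<noteq> cz"
    and x: "x \<in> leaves VT ET" "(cx, x) \<in> ET\<^sup>*"
    and y: "y \<in> leaves VT ET" "(cy, y) \<in> ET\<^sup>*"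
    and z: "z \<in> leaves VT ET" "(cz, z) \<in> ET\<^sup>*"
  shows "(lcaS VS ES {Vx (\<sigma> x), Vx (\<sigma> y)}, \<sigma> z) \<in> ES\<^sup>*"
proof -
  have leafV: "leaves VT ET \<subseteq> VT" by (auto simp: leaves_def)
  have "lcaT VT ET {x, y} = v"
    using T.lcaT_pair_eq[OF _ _ children(1,2,4) x(2) y(2)] x(1) y(1) leafV by blast
  moreover have "lcaT VT ET {x, z} = v"
    using T.lcaT_pair_eq[OF _ _ children(1,3,5) x(2) z(2)] x(1) z(1) leafV by blast
  moreover have "\<mu> v \<in> Vx ` inner VS ES r0S" using s by simp
  ultimately have "lcaS VS ES {Vx (\<sigma> x), Vx (\<sigma> y)} = lcaS VS ES {Vx (\<sigma> x), Vx (\<sigma> z)}"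
    using R4[unfolded axiom_R4_def, rule_format, OF x(1) y(1) z(1)] by simp
  then show ?thesis
    using S.lcaS_least_upper_bound(2)[of "{Vx (\<sigma> x), Vx (\<sigma> z)}" "Vx (\<sigma> z)"]
      species_in_elems x(1) z(1) by (simp add: tree_le_def)
qed

lemma mu_inner_eq_lcaS_pair:
  assumes R4: "axiom_R4 VT ET r0T \<sigma> VS ES r0S \<mu>"
    and s: "\<mu> v = Vx s" "s \<in> inner VS ES r0S"
    and children: "(v, cx) \<in> ET" "(v, cy) \<in> ET" "cx \<noteq> cy"
    and x: "x \<in> leaves VT ET" "(cx, x) \<in> ET\<^sup>*"
    and y: "y \<in> leaves VT ET" "(cy, y) \<in> ET\<^sup>*"
  shows "lcaS VS ES {Vx (\<sigma> x), Vx (\<sigma> y)} = s"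
proof (rule ccontr)
  define m where "m = lcaS VS ES {Vx (\<sigma> x), Vx (\<sigma> y)}"
  assume "m \<noteq> s"
  have v: "v \<in> VT" using children T.edges_subset by auto
  have xy_elems: "{Vx (\<sigma> x), Vx (\<sigma> y)} \<subseteq> vertex_elems VS \<union> edge_elems ES"
    using species_in_elems x(1) y(1) by blast
  have "(v, x) \<in> ET\<^sup>*" "(v, y) \<in> ET\<^sup>*" using children x y by (auto intro: converse_rtrancl_into_rtrancl)
  then have "elem_le ES (Vx (\<sigma> x)) (Vx s)" "elem_le ES (Vx (\<sigma> y)) (Vx s)"
    using species_le_mu[OF x(1) _ v] species_le_mu[OF y(1) _ v] s(1) by auto
  moreover have "s \<in> VS" using s(2) by (simp add: inner_def)
  ultimately have "(s, m) \<in> ES\<^sup>*"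
    using S.lcaS_least_upper_bound(3)[OF _ xy_elems] unfolding m_def by auto
  then obtain c where sc: "(s, c) \<in> ES" and cm: "(c, m) \<in> ES\<^sup>*"
    using \<open>m \<noteq> s\<close> by (auto dest: rtranclD tranclD)
  have "(m, \<sigma> x) \<in> ES\<^sup>*" using S.lcaS_least_upper_bound(2)[OF _ xy_elems, of "Vx (\<sigma> x)"]
    unfolding m_def by (simp add: tree_le_def)
  then have "elem_le ES (\<mu> cx) (Ed s c)"
    using mu_child_le_edge[OF s sc children(1) x] cm by (meson rtrancl_trans)
  moreover obtain k where k: "(v, k) \<in> ET" "\<not> elem_le ES (\<mu> k) (Ed s c)"
    using children_not_all_below_edge[OF v s sc] by blast
  ultimately have "k \<noteq> cx" by auto
  obtain z where z: "z \<in> leaves VT ET" "(k, z) \<in> ET\<^sup>*"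
    using T.exists_leaf_below k(1) T.edges_subset by blast
  have "(m, \<sigma> z) \<in> ES\<^sup>*"
    using axiom_R4_leaf_below_lcaS_pair[OF R4 s children(1,2) k(1) children(3)] \<open>k \<noteq> cx\<close> x y z
    unfolding m_def by blast
  then have "elem_le ES (\<mu> k) (Ed s c)"
    using mu_child_le_edge[OF s sc k(1) z] cm by (meson rtrancl_trans)
  then show False using k(2) by contradiction
qed

end

theorem corollary1:
  fixes VT :: "'g set" and ET :: "('g \<times> 'g) set" and r0T :: 'g
    and VS :: "'s set" and ES :: "('s \<times> 's) set" and r0S :: 's
    and \<sigma> :: "'g \<Rightarrow> 's" and \<mu> :: "'g \<Rightarrow> 's elem" and A :: "'g set"
  assumes "planted_phylo VS ES r0S"
    and "gene_tree VT ET r0T \<sigma> (leaves VS ES)"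
    and "reconc_map VT ET r0T \<sigma> VS ES r0S \<mu>"
    and "axiom_R4 VT ET r0T \<sigma> VS ES r0S \<mu>"
    and "A \<subseteq> leaves VT ET"
    and "card (\<sigma> ` A) \<ge> 2"
    and "elem_less ES (Vx (lcaS VS ES (Vx ` \<sigma> ` A))) (\<mu> (lcaT VT ET A))"
  shows "\<mu> (lcaT VT ET A) \<in> edge_elems ES"
proof (rule ccontr)
  interpret reconciliation VS ES r0S VT ET r0T \<sigma> \<mu>
    using assms(1-3) by unfold_locales (auto simp: gene_tree_def planted_tree_def)
  define v where "v = lcaT VT ET A"
  define t where "t = lcaS VS ES (Vx ` \<sigma> ` A)"
  have A: "A \<noteq> {}" "A \<subseteq> VT" "finite A"
    using assms(5,6) T.finite_vertices finite_subset by (fastforce simp: leaves_def)+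
  then have "v \<notin> A" using T.lcaT_leaves_not_mem assms(5,6) card_image_le[of A \<sigma>] unfolding v_def
    by fastforce
  then obtain x y cx cy where xy: "x \<in> A" "y \<in> A" "(v, cx) \<in> ET" "(v, cy) \<in> ET" "cx \<noteq> cy"
    "(cx, x) \<in> ET\<^sup>*" "(cy, y) \<in> ET\<^sup>*"
    using T.lcaT_splits[OF A(1,2)] unfolding v_def by metis
  then have "v \<in> VT" "v \<noteq> r0T" using T.edges_subset T.root_child_unique by auto
  moreover assume "\<mu> (lcaT VT ET A) \<notin> edge_elems ES"
  ultimately obtain s where s: "\<mu> v = Vx s" "s \<in> VS" "s \<noteq> r0S"
    using mu_in_elems mu_eq_root_iff unfolding v_def by (auto simp: vertex_elems_def)
  have "(s, t) \<in> ES\<^sup>+" using assms(7) s unfolding v_def t_def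
    by (auto simp: elem_less_def tree_le_def dest: rtranclD)
  then have "s \<in> inner VS ES r0S" using S.inner_if_proper_ancestor s(2,3) by blast
  then have "s = lcaS VS ES {Vx (\<sigma> x), Vx (\<sigma> y)}"
    using mu_inner_eq_lcaS_pair[OF assms(4) s(1) _ xy(3-5) _ xy(6) _ xy(7)] xy(1,2) assms(5)
    by auto
  moreover have "Vx ` \<sigma> ` A \<subseteq> vertex_elems VS \<union> edge_elems ES"
    using species_in_elems assms(5) by blast
  ultimately have "(t, s) \<in> ES\<^sup>*"
    using S.lcaS_mono[of "{Vx (\<sigma> x), Vx (\<sigma> y)}"] xy(1,2) unfolding t_def by simp
  then show False using \<open>(s, t) \<in> ES\<^sup>+\<close> S.no_cycle by (meson rtrancl_trancl_trancl)
qed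

end
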